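(* Let $f,f_0\in\mathcal F$. Let $g_0$ be a density on $\mathcal X$ with $g_0(x)\le\bar g<\infty$, and let $g$ and $u$ be densities on $\mathcal X$ with $u(x)\ge\underline u>0$ for all $x$. Then $$d_h^2(f_0,f)\le\frac{4\bar g}{\underline u}\int\Big(\sqrt{f_0(y|x)u(x)}-\sqrt{f(y|x)g(x)}\Big)^2\,dy\,dx.$$
   Context: $\mathcal Y\subset\mathbb R^{d_y}$ and $\mathcal X\subset\mathbb R^{d_x}$. $\mathcal F$ is the set of Borel measurable $f:\mathcal Y\times\mathcal X\to[0,\infty)$ with $\int f(y|x)\,dy=1$ for every $x\in\mathcal X$. For $f_1,f_2\in\mathcal F$, $d_h(f_1,f_2)=\big(\int(\sqrt{f_1(y|x)}-\sqrt{f_2(y|x)})^2g_0(x)\,dy\,dx\big)^{1/2}$. All densities are with respect to Lebesgue measure. *)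

theory Defs
  imports "HOL-Analysis.Analysis"
begin

text \<open>The class F of conditional densities f(y|x) on Y \<times> X, written f y x.
  Borel measurability is on Y \<times> X (trace of the Borel sets), expressed via the
  zero extension outside Y \<times> X.\<close>
definition cond_dens_class :: "'y::euclidean_space set \<Rightarrow> 'x::euclidean_space set \<Rightarrow> ('y \<Rightarrow> 'x \<Rightarrow> real) set" where
  "cond_dens_class Y X = {f.
     (\<lambda>(y,x). indicator (Y \<times> X) (y,x) * f y x) \<in> borel_measurable (lborel \<Otimes>\<^sub>M lborel) \<and>
     (\<forall>y\<in>Y. \<forall>x\<in>X. 0 \<le> f y x) \<and>
     (\<forall>x\<in>X. (\<integral>\<^sup>+ y. indicator Y y * ennreal (f y x) \<partial>lborel) = 1)}"

definition density_on :: "'x::euclidean_space set \<Rightarrow> ('x \<Rightarrow> real) \<Rightarrow> bool" where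
  "density_on X g \<longleftrightarrow>
     (\<lambda>x. indicator X x * g x) \<in> borel_measurable lborel \<and>
     (\<forall>x\<in>X. 0 \<le> g x) \<and>
     (\<integral>\<^sup>+ x. indicator X x * ennreal (g x) \<partial>lborel) = 1"

definition hellinger_sq :: "'y::euclidean_space set \<Rightarrow> 'x::euclidean_space set \<Rightarrow> ('x \<Rightarrow> real)
     \<Rightarrow> ('y \<Rightarrow> 'x \<Rightarrow> real) \<Rightarrow> ('y \<Rightarrow> 'x \<Rightarrow> real) \<Rightarrow> ennreal" where
  "hellinger_sq Y X g0 f1 f2 =
     (\<integral>\<^sup>+ (y,x). indicator (Y \<times> X) (y,x) *
        ennreal ((sqrt (f1 y x) - sqrt (f2 y x))\<^sup>2 * g0 x) \<partial>(lborel \<Otimes>\<^sub>M lborel))"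

end

theory Submission
  imports Defs
begin

text \<open>Write a = sqrt f0, b = sqrt f, p = sqrt u and q = sqrt g. Since
  g0 \<le> gbar \<le> (gbar / ulow) u, the squared Hellinger distance is at most
  (gbar / ulow) \<parallel>(a - b) p\<parallel>^2 in L^2(dy dx). Now (a - b) p = (a p - b q) + b (q - p), and for
  each fixed x the fibres a(., x) and b(., x) are unit vectors of L^2(dy), so the reverse
  triangle inequality gives |p x - q x| \<le> \<parallel>a(., x) p x - b(., x) q x\<parallel>. Integrating over x,
  \<parallel>b (q - p)\<parallel> \<le> \<parallel>a p - b q\<parallel>, hence \<parallel>(a - b) p\<parallel>^2 \<le> 4 \<parallel>a p - b q\<parallel>^2.\<close>

lemma ennreal_power2_add_le:
  fixes s t :: real
  shows "ennreal ((s + t)\<^sup>2) \<le> 2 * ennreal (s\<^sup>2) + 2 * ennreal (t\<^sup>2)"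
proof -
  have "(s + t)\<^sup>2 \<le> 2 * s\<^sup>2 + 2 * t\<^sup>2"
    using zero_le_power2[of "s - t"] by (simp add: power2_eq_square algebra_simps)
  then have "ennreal ((s + t)\<^sup>2) \<le> ennreal (2 * s\<^sup>2 + 2 * t\<^sup>2)"
    by (rule ennreal_leI)
  also have "\<dots> = 2 * ennreal (s\<^sup>2) + 2 * ennreal (t\<^sup>2)"
    by (simp add: ennreal_plus ennreal_mult)
  finally show ?thesis .
qed

lemma power2_diff_le_nn_integral_unit_combination_of_le:
  fixes a b :: "'a \<Rightarrow> real"
  assumes [measurable]: "a \<in> borel_measurable M" "b \<in> borel_measurable M"
    and a_unit: "(\<integral>\<^sup>+y. ennreal ((a y)\<^sup>2) \<partial>M) = 1"
    and b_unit: "(\<integral>\<^sup>+y. ennreal ((b y)\<^sup>2) \<partial>M) = 1"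
    and "0 \<le> q" "q \<le> p"
  shows "ennreal ((p - q)\<^sup>2) \<le> (\<integral>\<^sup>+y. ennreal ((a y * p - b y * q)\<^sup>2) \<partial>M)"
proof -
  let ?I = "\<integral>\<^sup>+y. ennreal ((a y * p - b y * q)\<^sup>2) \<partial>M"
  have identity: "ennreal ((a y * p - b y * q)\<^sup>2) + ennreal ((p - q) * q) * ennreal ((b y)\<^sup>2)
      = ennreal (p * q) * ennreal ((a y - b y)\<^sup>2) + ennreal ((p - q) * p) * ennreal ((a y)\<^sup>2)" for y
  proof -
    have "(a y * p - b y * q)\<^sup>2 + (p - q) * q * (b y)\<^sup>2 = p * q * (a y - b y)\<^sup>2 + (p - q) * p * (a y)\<^sup>2"
      by (simp add: power2_eq_square algebra_simps)
    then show ?thesis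
      using assms by (simp add: ennreal_mult[symmetric] ennreal_plus[symmetric] del: ennreal_plus)
  qed
  have "?I + ennreal ((p - q) * q)
      = (\<integral>\<^sup>+y. ennreal ((a y * p - b y * q)\<^sup>2) + ennreal ((p - q) * q) * ennreal ((b y)\<^sup>2) \<partial>M)"
    by (simp add: nn_integral_add nn_integral_cmult b_unit)
  also have "\<dots> = ennreal (p * q) * (\<integral>\<^sup>+y. ennreal ((a y - b y)\<^sup>2) \<partial>M) + ennreal ((p - q) * p)"
    by (simp add: identity nn_integral_add nn_integral_cmult a_unit)
  finally have bound: "ennreal ((p - q) * p) \<le> ?I + ennreal ((p - q) * q)"
    by (metis add.commute le_iff_add)
  show ?thesis
  proof (cases ?I)
    case (real i)
    with bound assms have "(p - q) * p \<le> i + (p - q) * q"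
      by (simp add: ennreal_plus[symmetric] del: ennreal_plus)
    then have "(p - q)\<^sup>2 \<le> i" by (simp add: power2_eq_square algebra_simps)
    with real show ?thesis by simp
  qed simp
qed

lemma power2_diff_le_nn_integral_unit_combination:
  fixes a b :: "'a \<Rightarrow> real"
  assumes "a \<in> borel_measurable M" "b \<in> borel_measurable M"
    and "(\<integral>\<^sup>+y. ennreal ((a y)\<^sup>2) \<partial>M) = 1" "(\<integral>\<^sup>+y. ennreal ((b y)\<^sup>2) \<partial>M) = 1"
    and "0 \<le> p" "0 \<le> q"
  shows "ennreal ((p - q)\<^sup>2) \<le> (\<integral>\<^sup>+y. ennreal ((a y * p - b y * q)\<^sup>2) \<partial>M)"
proof (cases "q \<le> p")
  case False
  moreover have "(q - p)\<^sup>2 = (p - q)\<^sup>2" "\<And>y. (b y * q - a y * p)\<^sup>2 = (a y * p - b y * q)\<^sup>2"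
    by (simp_all add: power2_commute)
  ultimately show ?thesis
    using power2_diff_le_nn_integral_unit_combination_of_le[where a=b and b=a and p=q and q=p] assms by simp
qed (use power2_diff_le_nn_integral_unit_combination_of_le assms in blast)

lemma (in pair_sigma_finite) nn_integral_sq_weight_mismatch_le:
  fixes a b :: "'a \<times> 'b \<Rightarrow> real" and p q :: "'b \<Rightarrow> real"
  assumes [measurable]: "a \<in> borel_measurable (M1 \<Otimes>\<^sub>M M2)" "b \<in> borel_measurable (M1 \<Otimes>\<^sub>M M2)"
      "p \<in> borel_measurable M2" "q \<in> borel_measurable M2"
    and "\<And>x. 0 \<le> p x" "\<And>x. 0 \<le> q x"
    and a_unit: "\<And>x. x \<in> X \<Longrightarrow> (\<integral>\<^sup>+y. ennreal ((a (y, x))\<^sup>2) \<partial>M1) = 1"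
    and b_unit: "\<And>x. x \<in> X \<Longrightarrow> (\<integral>\<^sup>+y. ennreal ((b (y, x))\<^sup>2) \<partial>M1) = 1"
    and "\<And>x. x \<notin> X \<Longrightarrow> p x = q x"
  shows "(\<integral>\<^sup>+z. ennreal ((b z * (q (snd z) - p (snd z)))\<^sup>2) \<partial>(M1 \<Otimes>\<^sub>M M2))
    \<le> (\<integral>\<^sup>+z. ennreal ((a z * p (snd z) - b z * q (snd z))\<^sup>2) \<partial>(M1 \<Otimes>\<^sub>M M2))"
proof -
  have fibre: "(\<integral>\<^sup>+y. ennreal ((b (y, x) * (q x - p x))\<^sup>2) \<partial>M1)
      \<le> (\<integral>\<^sup>+y. ennreal ((a (y, x) * p x - b (y, x) * q x)\<^sup>2) \<partial>M1)" if "x \<in> space M2" for x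
  proof (cases "x \<in> X")
    case True
    have [measurable]: "(\<lambda>y. a (y, x)) \<in> borel_measurable M1" "(\<lambda>y. b (y, x)) \<in> borel_measurable M1"
      using \<open>x \<in> space M2\<close> by (simp_all add: measurable_Pair1)
    have "(\<integral>\<^sup>+y. ennreal ((b (y, x) * (q x - p x))\<^sup>2) \<partial>M1)
        = ennreal ((p x - q x)\<^sup>2) * (\<integral>\<^sup>+y. ennreal ((b (y, x))\<^sup>2) \<partial>M1)"
      by (subst nn_integral_cmult[symmetric])
         (auto simp: ennreal_mult[symmetric] power_mult_distrib power2_commute mult.commute
               intro!: nn_integral_cong)
    also have "\<dots> \<le> (\<integral>\<^sup>+y. ennreal ((a (y, x) * p x - b (y, x) * q x)\<^sup>2) \<partial>M1)"
      using power2_diff_le_nn_integral_unit_combination[of "\<lambda>y. a (y, x)" M1 "\<lambda>y. b (y, x)"]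
        True a_unit b_unit assms(5,6) by simp
    finally show ?thesis .
  qed (use assms(9) in simp)
  show ?thesis
    using fibre by (simp add: nn_integral_snd[symmetric] nn_integral_mono)
qed

lemma (in pair_sigma_finite) nn_integral_sq_diff_weighted_le:
  fixes a b :: "'a \<times> 'b \<Rightarrow> real" and p q :: "'b \<Rightarrow> real"
  assumes "a \<in> borel_measurable (M1 \<Otimes>\<^sub>M M2)" "b \<in> borel_measurable (M1 \<Otimes>\<^sub>M M2)"
      "p \<in> borel_measurable M2" "q \<in> borel_measurable M2"
    and "\<And>x. 0 \<le> p x" "\<And>x. 0 \<le> q x"
    and "\<And>x. x \<in> X \<Longrightarrow> (\<integral>\<^sup>+y. ennreal ((a (y, x))\<^sup>2) \<partial>M1) = 1"
    and "\<And>x. x \<in> X \<Longrightarrow> (\<integral>\<^sup>+y. ennreal ((b (y, x))\<^sup>2) \<partial>M1) = 1"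
    and "\<And>x. x \<notin> X \<Longrightarrow> p x = q x"
  shows "(\<integral>\<^sup>+z. ennreal (((a z - b z) * p (snd z))\<^sup>2) \<partial>(M1 \<Otimes>\<^sub>M M2))
    \<le> 4 * (\<integral>\<^sup>+z. ennreal ((a z * p (snd z) - b z * q (snd z))\<^sup>2) \<partial>(M1 \<Otimes>\<^sub>M M2))"
proof -
  note [measurable] = assms(1-4)
  let ?J = "\<integral>\<^sup>+z. ennreal ((a z * p (snd z) - b z * q (snd z))\<^sup>2) \<partial>(M1 \<Otimes>\<^sub>M M2)"
  let ?K = "\<integral>\<^sup>+z. ennreal ((b z * (q (snd z) - p (snd z)))\<^sup>2) \<partial>(M1 \<Otimes>\<^sub>M M2)"
  have "(\<integral>\<^sup>+z. ennreal (((a z - b z) * p (snd z))\<^sup>2) \<partial>(M1 \<Otimes>\<^sub>M M2))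
      \<le> (\<integral>\<^sup>+z. 2 * ennreal ((a z * p (snd z) - b z * q (snd z))\<^sup>2)
          + 2 * ennreal ((b z * (q (snd z) - p (snd z)))\<^sup>2) \<partial>(M1 \<Otimes>\<^sub>M M2))"
  proof (rule nn_integral_mono)
    fix z
    have "(a z - b z) * p (snd z) = (a z * p (snd z) - b z * q (snd z)) + b z * (q (snd z) - p (snd z))"
      by (simp add: algebra_simps)
    then show "ennreal (((a z - b z) * p (snd z))\<^sup>2) \<le> 2 * ennreal ((a z * p (snd z) - b z * q (snd z))\<^sup>2)
        + 2 * ennreal ((b z * (q (snd z) - p (snd z)))\<^sup>2)"
      by (simp only: ennreal_power2_add_le)
  qed
  also have "\<dots> = 2 * ?J + 2 * ?K"
    by (simp add: nn_integral_add nn_integral_cmult)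
  also have "\<dots> \<le> 2 * ?J + 2 * ?J"
    using nn_integral_sq_weight_mismatch_le[OF assms] by (intro add_left_mono mult_left_mono) auto
  also have "\<dots> = 4 * ?J"
    by (simp flip: distrib_right)
  finally show ?thesis .
qed

definition sqrt_on :: "'a set \<Rightarrow> ('a \<Rightarrow> real) \<Rightarrow> 'a \<Rightarrow> real" where
  "sqrt_on S h z = sqrt (indicator S z * h z)"

lemma borel_measurable_sqrt_on:
  "(\<lambda>z. indicator S z * h z) \<in> borel_measurable M \<Longrightarrow> sqrt_on S h \<in> borel_measurable M"
  unfolding sqrt_on_def by (erule measurable_compose) simp

lemma sqrt_on_nonneg: "(\<And>z. z \<in> S \<Longrightarrow> 0 \<le> h z) \<Longrightarrow> 0 \<le> sqrt_on S h z"
  by (simp add: sqrt_on_def indicator_def)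

lemma cond_dens_class_sqrt_on_measurable:
  "f \<in> cond_dens_class Y X \<Longrightarrow>
    sqrt_on (Y \<times> X) (case_prod f) \<in> borel_measurable (lborel \<Otimes>\<^sub>M lborel)"
  unfolding cond_dens_class_def by (auto intro: borel_measurable_sqrt_on simp: case_prod_unfold)

lemma cond_dens_class_sqrt_on_fibre:
  assumes "f \<in> cond_dens_class Y X" and "x \<in> X"
  shows "(\<integral>\<^sup>+y. ennreal ((sqrt_on (Y \<times> X) (case_prod f) (y, x))\<^sup>2) \<partial>lborel) = 1"
proof -
  have "(\<integral>\<^sup>+y. ennreal ((sqrt_on (Y \<times> X) (case_prod f) (y, x))\<^sup>2) \<partial>lborel)
      = (\<integral>\<^sup>+y. indicator Y y * ennreal (f y x) \<partial>lborel)"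
    using assms by (intro nn_integral_cong) (auto simp: cond_dens_class_def sqrt_on_def indicator_def)
  then show ?thesis
    using assms by (simp add: cond_dens_class_def)
qed

lemma density_on_sqrt_on_measurable:
  "density_on X g \<Longrightarrow> sqrt_on X g \<in> borel_measurable lborel"
  unfolding density_on_def by (auto intro: borel_measurable_sqrt_on)

lemma density_on_sqrt_on_nonneg: "density_on X g \<Longrightarrow> 0 \<le> sqrt_on X g x"
  unfolding density_on_def by (auto intro: sqrt_on_nonneg)

lemma hellinger_sq_le_sqrt_on_weighted:
  fixes f f0 :: "'y::euclidean_space \<Rightarrow> 'x::euclidean_space \<Rightarrow> real"
  assumes "f \<in> cond_dens_class Y X" "f0 \<in> cond_dens_class Y X" "density_on X u"
    and g0_le: "\<And>x. x \<in> X \<Longrightarrow> g0 x \<le> c * u x"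
  shows "hellinger_sq Y X g0 f0 f \<le> ennreal c *
    (\<integral>\<^sup>+z. ennreal (((sqrt_on (Y \<times> X) (case_prod f0) z - sqrt_on (Y \<times> X) (case_prod f) z)
      * sqrt_on X u (snd z))\<^sup>2) \<partial>(lborel \<Otimes>\<^sub>M lborel))"
proof -
  let ?A = "sqrt_on (Y \<times> X) (case_prod f0)" and ?B = "sqrt_on (Y \<times> X) (case_prod f)"
    and ?P = "sqrt_on X u"
  note [measurable] = cond_dens_class_sqrt_on_measurable[OF assms(1)]
    cond_dens_class_sqrt_on_measurable[OF assms(2)] density_on_sqrt_on_measurable[OF assms(3)]
  have pointwise: "indicator (Y \<times> X) (y, x) * ennreal ((sqrt (f0 y x) - sqrt (f y x))\<^sup>2 * g0 x)
      \<le> ennreal c * ennreal (((?A (y, x) - ?B (y, x)) * ?P x)\<^sup>2)" for y x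
  proof (cases "(y, x) \<in> Y \<times> X")
    case True
    then have "(sqrt (f0 y x) - sqrt (f y x))\<^sup>2 * g0 x \<le> (sqrt (f0 y x) - sqrt (f y x))\<^sup>2 * (c * u x)"
      using g0_le by (simp add: mult_left_mono)
    also have "\<dots> = c * ((?A (y, x) - ?B (y, x)) * ?P x)\<^sup>2"
      using True assms(3) by (simp add: sqrt_on_def density_on_def power_mult_distrib)
    finally show ?thesis
      using True by (simp add: ennreal_leI flip: ennreal_mult'')
  qed simp
  have "hellinger_sq Y X g0 f0 f
      \<le> (\<integral>\<^sup>+z. ennreal c * ennreal (((?A z - ?B z) * ?P (snd z))\<^sup>2) \<partial>(lborel \<Otimes>\<^sub>M lborel))"
    unfolding hellinger_sq_def using pointwise by (auto intro: nn_integral_mono)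
  also have "\<dots> = ennreal c * (\<integral>\<^sup>+z. ennreal (((?A z - ?B z) * ?P (snd z))\<^sup>2) \<partial>(lborel \<Otimes>\<^sub>M lborel))"
    by (simp add: nn_integral_cmult)
  finally show ?thesis .
qed

lemma nn_integral_sqrt_on_product_diff:
  "(\<integral>\<^sup>+z. ennreal ((sqrt_on (Y \<times> X) (case_prod f0) z * sqrt_on X u (snd z)
      - sqrt_on (Y \<times> X) (case_prod f) z * sqrt_on X g (snd z))\<^sup>2) \<partial>M)
    = (\<integral>\<^sup>+(y, x). indicator (Y \<times> X) (y, x) *
      ennreal ((sqrt (f0 y x * u x) - sqrt (f y x * g x))\<^sup>2) \<partial>M)"
  by (rule nn_integral_cong) (auto simp: sqrt_on_def indicator_def real_sqrt_mult)

theorem lemma1: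
  fixes Y :: "'y::euclidean_space set" and X :: "'x::euclidean_space set"
    and f f0 :: "'y \<Rightarrow> 'x \<Rightarrow> real" and g0 g u :: "'x \<Rightarrow> real"
    and gbar ulow :: real
  assumes "Y \<in> sets lborel" and "X \<in> sets lborel"
    and "f \<in> cond_dens_class Y X" and "f0 \<in> cond_dens_class Y X"
    and "density_on X g0" and "\<forall>x\<in>X. g0 x \<le> gbar"
    and "density_on X g" and "density_on X u"
    and "ulow > 0" and "\<forall>x\<in>X. u x \<ge> ulow"
  shows "hellinger_sq Y X g0 f0 f \<le>
    ennreal (4 * gbar / ulow) *
    (\<integral>\<^sup>+ (y,x). indicator (Y \<times> X) (y,x) *
        ennreal ((sqrt (f0 y x * u x) - sqrt (f y x * g x))\<^sup>2) \<partial>(lborel \<Otimes>\<^sub>M lborel))"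
proof -
  let ?A = "sqrt_on (Y \<times> X) (case_prod f0)" and ?B = "sqrt_on (Y \<times> X) (case_prod f)"
    and ?P = "sqrt_on X u" and ?Q = "sqrt_on X g"
  define c where "c = gbar / ulow"
  have g0_le: "g0 x \<le> c * u x" if "x \<in> X" for x
  proof -
    have "0 \<le> gbar" using assms(5,6) that by (force simp: density_on_def)
    then have "gbar \<le> c * u x"
      using assms(9,10) that by (simp add: c_def field_simps mult_left_mono)
    then show ?thesis using assms(6) that by (blast intro: order_trans)
  qed
  have "hellinger_sq Y X g0 f0 f
      \<le> ennreal c * (\<integral>\<^sup>+z. ennreal (((?A z - ?B z) * ?P (snd z))\<^sup>2) \<partial>(lborel \<Otimes>\<^sub>M lborel))"
    using assms(3,4,8) g0_le by (rule hellinger_sq_le_sqrt_on_weighted)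
  also have "\<dots> \<le> ennreal c * (4 * (\<integral>\<^sup>+z. ennreal ((?A z * ?P (snd z) - ?B z * ?Q (snd z))\<^sup>2)
      \<partial>(lborel \<Otimes>\<^sub>M lborel)))"
    using assms(3,4,7,8)
    by (intro mult_left_mono lborel_pair.nn_integral_sq_diff_weighted_le[where X=X]
        cond_dens_class_sqrt_on_measurable density_on_sqrt_on_measurable)
      (simp_all add: cond_dens_class_sqrt_on_fibre density_on_sqrt_on_nonneg, simp add: sqrt_on_def)
  also have "\<dots> = ennreal (4 * gbar / ulow) * (\<integral>\<^sup>+ (y,x). indicator (Y \<times> X) (y,x) *
        ennreal ((sqrt (f0 y x * u x) - sqrt (f y x * g x))\<^sup>2) \<partial>(lborel \<Otimes>\<^sub>M lborel))"
    by (simp add: nn_integral_sqrt_on_product_diff c_def ennreal_mult' mult.assoc mult.left_commute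
        flip: times_divide_eq_right)
  finally show ?thesis .
qed

end
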